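(* Let $f$ be a periodic traveling wave of speed $c$ ($c^2\neq 1$). For $\beta\in\mathbb{R}$, the imaginary number $\lambda=i\beta$ lies in $\sigma(\mathrm{P})$ if and only if it lies in $\sigma(\mathrm{Q})$.
   Context: A traveling wave of speed $c$ ($c^2\neq1$) is a real solution $f$ of $(c^2-1)f''+\sin f=0$, with energy $E$ given by $\tfrac12(c^2-1)(f')^2+1-\cos f=E$; periodic traveling waves are librational ($0<E<2$) or rotational ($E<0$ if $c^2<1$, $E>2$ if $c^2>1$). Let $\gamma=1/(c^2-1)$. $\sigma(\mathrm{P})$ is the set of $\lambda\in\mathbb{C}$ for which $p''-2c\gamma\lambda p'+\gamma(\lambda^2+\cos f(z))p=0$ has a nontrivial solution bounded on $\mathbb{R}$. $\sigma(\mathrm{Q})$ is the set of $\lambda\in\mathbb{C}$ for which $q''+\gamma\cos(f(z))q=\mu q$ with $\mu=\gamma^2\lambda^2$ has a nontrivial solution bounded on $\mathbb{R}$. *)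

theory Defs
  imports "HOL-Analysis.Analysis"
begin

definition traveling_wave :: "real \<Rightarrow> (real \<Rightarrow> real) \<Rightarrow> bool" where
  "traveling_wave c f \<longleftrightarrow> c\<^sup>2 \<noteq> 1 \<and>
     (\<exists>f1 f2. \<forall>z. (f has_real_derivative f1 z) (at z) \<and>
                    (f1 has_real_derivative f2 z) (at z) \<and>
                    (c\<^sup>2 - 1) * f2 z + sin (f z) = 0)"

text \<open>Energy E = (1/2)(c^2-1)(f')^2 + 1 - cos f (constant along solutions).\<close>
definition tw_energy :: "real \<Rightarrow> (real \<Rightarrow> real) \<Rightarrow> real \<Rightarrow> real" where
  "tw_energy c f z = 1/2 * (c\<^sup>2 - 1) * (deriv f z)\<^sup>2 + 1 - cos (f z)"

definition periodic_traveling_wave :: "real \<Rightarrow> (real \<Rightarrow> real) \<Rightarrow> bool" where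
  "periodic_traveling_wave c f \<longleftrightarrow> traveling_wave c f \<and>
     (let E = tw_energy c f 0 in
        (0 < E \<and> E < 2) \<or> (c\<^sup>2 < 1 \<and> E < 0) \<or> (c\<^sup>2 > 1 \<and> E > 2))"

definition tw_gamma :: "real \<Rightarrow> real" where
  "tw_gamma c = 1 / (c\<^sup>2 - 1)"

definition sigmaP :: "real \<Rightarrow> (real \<Rightarrow> real) \<Rightarrow> complex set" where
  "sigmaP c f = {l. \<exists>p p1 p2 :: real \<Rightarrow> complex.
     (\<forall>z. (p has_vector_derivative p1 z) (at z) \<and>
          (p1 has_vector_derivative p2 z) (at z) \<and>
          p2 z - 2 * of_real c * of_real (tw_gamma c) * l * p1 z
            + of_real (tw_gamma c) * (l\<^sup>2 + of_real (cos (f z))) * p z = 0) \<and>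
     bounded (range p) \<and> (\<exists>z. p z \<noteq> 0)}"

definition sigmaQ :: "real \<Rightarrow> (real \<Rightarrow> real) \<Rightarrow> complex set" where
  "sigmaQ c f = {l. \<exists>q q1 q2 :: real \<Rightarrow> complex.
     (\<forall>z. (q has_vector_derivative q1 z) (at z) \<and>
          (q1 has_vector_derivative q2 z) (at z) \<and>
          q2 z + of_real (tw_gamma c) * of_real (cos (f z)) * q z
            = of_real ((tw_gamma c)\<^sup>2) * l\<^sup>2 * q z) \<and>
     bounded (range q) \<and> (\<exists>z. q z \<noteq> 0)}"

end

theory Submission
  imports Defs
begin

text \<open>With \<open>a = c \<gamma> \<lambda>\<close> one has \<open>a\<^sup>2 = \<gamma> \<lambda>\<^sup>2 + \<gamma>\<^sup>2 \<lambda>\<^sup>2\<close>, since \<open>c\<^sup>2 \<gamma> = 1 + \<gamma>\<close>.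
  Hence the substitution \<open>p = e\<^sup>a\<^sup>z q\<close> turns the equation for \<open>p\<close> into the equation for \<open>q\<close>
  and back. For \<open>\<lambda> = i\<beta>\<close> the factor \<open>a\<close> is purely imaginary, so \<open>|e\<^sup>a\<^sup>z| = 1\<close> and the
  substitution preserves boundedness and nontriviality of solutions.\<close>

definition has_bounded_nontrivial_solution ::
    "(real \<Rightarrow> complex \<Rightarrow> complex \<Rightarrow> complex \<Rightarrow> complex) \<Rightarrow> bool" where
  "has_bounded_nontrivial_solution L \<longleftrightarrow> (\<exists>p p1 p2 :: real \<Rightarrow> complex.
     (\<forall>z. (p has_vector_derivative p1 z) (at z) \<and> (p1 has_vector_derivative p2 z) (at z) \<and>
          L z (p z) (p1 z) (p2 z) = 0) \<and>
     bounded (range p) \<and> (\<exists>z. p z \<noteq> 0))"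

lemma sigmaP_iff_solution:
  "l \<in> sigmaP c f \<longleftrightarrow> has_bounded_nontrivial_solution (\<lambda>z p p1 p2.
     p2 - 2 * of_real c * of_real (tw_gamma c) * l * p1
       + of_real (tw_gamma c) * (l\<^sup>2 + of_real (cos (f z))) * p)"
  unfolding sigmaP_def has_bounded_nontrivial_solution_def by simp

lemma sigmaQ_iff_solution:
  "l \<in> sigmaQ c f \<longleftrightarrow> has_bounded_nontrivial_solution (\<lambda>z q q1 q2.
     q2 + of_real (tw_gamma c) * of_real (cos (f z)) * q - of_real ((tw_gamma c)\<^sup>2) * l\<^sup>2 * q)"
  unfolding sigmaQ_def has_bounded_nontrivial_solution_def by (simp add: right_minus_eq)

lemma has_vector_derivative_exp_linear:
  fixes b :: complex
  shows "((\<lambda>z::real. exp (b * of_real z)) has_vector_derivative (b * exp (b * of_real z))) (at z)"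
proof -
  have "((\<lambda>w. exp (b * w)) has_field_derivative (exp (b * of_real z) * b)) (at (of_real z))"
    by (auto intro!: derivative_eq_intros)
  from has_vector_derivative_real_field[OF this] show ?thesis
    by (simp add: mult.commute)
qed

lemma has_vector_derivative_exp_mult:
  fixes p :: "real \<Rightarrow> complex"
  assumes "(p has_vector_derivative p') (at z)"
  shows "((\<lambda>z. exp (b * of_real z) * p z) has_vector_derivative
           exp (b * of_real z) * (p' + b * p z)) (at z)"
  using has_vector_derivative_mult[OF has_vector_derivative_exp_linear assms]
  by (simp add: algebra_simps)

lemma has_bounded_nontrivial_solution_exp_gauge:
  assumes sol: "has_bounded_nontrivial_solution L"
    and imag: "Re b = 0"
    and gauge: "\<And>z e q q1 q2. M z (e * q) (e * (q1 + b * q)) (e * (q2 + 2 * b * q1 + b\<^sup>2 * q))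
                  = e * L z q q1 q2"
  shows "has_bounded_nontrivial_solution M"
proof -
  obtain p p1 p2 where
    D1: "\<And>z. (p has_vector_derivative p1 z) (at z)" and
    D2: "\<And>z. (p1 has_vector_derivative p2 z) (at z)" and
    eq: "\<And>z. L z (p z) (p1 z) (p2 z) = 0" and
    bd: "bounded (range p)" and nz: "\<exists>z. p z \<noteq> 0"
    using sol unfolding has_bounded_nontrivial_solution_def by blast
  define e where "e z = exp (b * of_real z)" for z
  define q where "q z = e z * p z" for z
  define q1 where "q1 z = e z * (p1 z + b * p z)" for z
  define q2 where "q2 z = e z * (p2 z + 2 * b * p1 z + b\<^sup>2 * p z)" for z
  have "(q has_vector_derivative q1 z) (at z)" for z
    unfolding q_def q1_def e_def by (rule has_vector_derivative_exp_mult[OF D1])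
  moreover have "(q1 has_vector_derivative q2 z) (at z)" for z
  proof -
    have "((\<lambda>z. p1 z + b * p z) has_vector_derivative (p2 z + b * p1 z)) (at z)"
      by (intro has_vector_derivative_add has_vector_derivative_mult_right D1 D2)
    from has_vector_derivative_exp_mult[OF this, of b] show ?thesis
      unfolding q1_def q2_def e_def by (simp add: algebra_simps power2_eq_square)
  qed
  moreover have "M z (q z) (q1 z) (q2 z) = 0" for z
    unfolding q_def q1_def q2_def gauge eq by simp
  moreover have "bounded (range q)"
  proof -
    obtain B where "\<And>z. norm (p z) \<le> B" using bd by (auto simp: bounded_iff)
    then show ?thesis
      unfolding bounded_iff q_def e_def
      by (auto simp: norm_mult norm_exp_eq_Re imag)
  qed
  moreover have "\<exists>z. q z \<noteq> 0"
    using nz by (auto simp: q_def e_def)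
  ultimately show ?thesis
    unfolding has_bounded_nontrivial_solution_def by blast
qed

lemma gauge_square_identity:
  fixes c \<gamma> :: real and l :: complex
  assumes "\<gamma> * (c\<^sup>2 - 1) = 1"
  shows "(of_real c * of_real \<gamma> * l)\<^sup>2 = of_real \<gamma> * l\<^sup>2 + of_real (\<gamma>\<^sup>2) * l\<^sup>2"
proof -
  have "c\<^sup>2 * \<gamma> = 1 + \<gamma>" using assms by (simp add: algebra_simps)
  have "(of_real c * of_real \<gamma> * l)\<^sup>2 = of_real (c\<^sup>2 * \<gamma>) * of_real \<gamma> * l\<^sup>2"
    by (simp add: power2_eq_square)
  also have "\<dots> = of_real \<gamma> * l\<^sup>2 + of_real (\<gamma>\<^sup>2) * l\<^sup>2"
    unfolding \<open>c\<^sup>2 * \<gamma> = 1 + \<gamma>\<close> by (simp add: algebra_simps power2_eq_square)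
  finally show ?thesis .
qed

lemma gauge_P_to_Q:
  fixes a g g2 l C e q q1 q2 :: complex
  assumes "a\<^sup>2 = g * l\<^sup>2 + g2 * l\<^sup>2"
  shows "e * (q2 + 2 * (- a) * q1 + (- a)\<^sup>2 * q) + g * C * (e * q) - g2 * l\<^sup>2 * (e * q)
       = e * (q2 - 2 * a * q1 + g * (l\<^sup>2 + C) * q)"
proof -
  have "e * (q2 + 2 * (- a) * q1 + (- a)\<^sup>2 * q) + g * C * (e * q) - g2 * l\<^sup>2 * (e * q)
      = e * (q2 - 2 * a * q1 + (g * l\<^sup>2 + g2 * l\<^sup>2) * q + g * C * q - g2 * l\<^sup>2 * q)"
    unfolding power2_minus assms by (simp add: algebra_simps)
  then show ?thesis by (simp add: algebra_simps)
qed

lemma gauge_Q_to_P: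
  fixes a g g2 l C e q q1 q2 :: complex
  assumes "a\<^sup>2 = g * l\<^sup>2 + g2 * l\<^sup>2"
  shows "e * (q2 + 2 * a * q1 + a\<^sup>2 * q) - 2 * a * (e * (q1 + a * q)) + g * (l\<^sup>2 + C) * (e * q)
       = e * (q2 + g * C * q - g2 * l\<^sup>2 * q)"
proof -
  have "e * (q2 + 2 * a * q1 + a\<^sup>2 * q) - 2 * a * (e * (q1 + a * q)) + g * (l\<^sup>2 + C) * (e * q)
      = e * (q2 - (g * l\<^sup>2 + g2 * l\<^sup>2) * q + g * (l\<^sup>2 + C) * q)"
    unfolding assms[symmetric] by (simp add: algebra_simps power2_eq_square)
  then show ?thesis by (simp add: algebra_simps)
qed

theorem corollary3p2:
  fixes c \<beta> :: real and f :: "real \<Rightarrow> real"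
  assumes "periodic_traveling_wave c f"
  shows "\<i> * of_real \<beta> \<in> sigmaP c f \<longleftrightarrow> \<i> * of_real \<beta> \<in> sigmaQ c f"
proof -
  define \<gamma> where "\<gamma> = tw_gamma c"
  define l where "l = \<i> * of_real \<beta>"
  define a where "a = of_real c * of_real \<gamma> * l"
  define P where "P z p p1 p2 =
    p2 - 2 * a * p1 + of_real \<gamma> * (l\<^sup>2 + of_real (cos (f z))) * p" for z p p1 p2
  define Q where "Q z q (q1 :: complex) q2 =
    q2 + of_real \<gamma> * of_real (cos (f z)) * q - of_real (\<gamma>\<^sup>2) * l\<^sup>2 * q" for z q q1 q2
  have "c\<^sup>2 \<noteq> 1"
    using assms unfolding periodic_traveling_wave_def traveling_wave_def by simp
  then have "\<gamma> * (c\<^sup>2 - 1) = 1" by (simp add: \<gamma>_def tw_gamma_def)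
  then have a_sq: "a\<^sup>2 = of_real \<gamma> * l\<^sup>2 + of_real (\<gamma>\<^sup>2) * l\<^sup>2"
    unfolding a_def by (rule gauge_square_identity)
  have "Re a = 0" "Re (- a) = 0" by (simp_all add: a_def l_def)
  have "l \<in> sigmaP c f \<longleftrightarrow> has_bounded_nontrivial_solution P"
    unfolding sigmaP_iff_solution P_def a_def \<gamma>_def by (simp add: mult.assoc)
  moreover have "l \<in> sigmaQ c f \<longleftrightarrow> has_bounded_nontrivial_solution Q"
    unfolding sigmaQ_iff_solution Q_def \<gamma>_def ..
  moreover have "has_bounded_nontrivial_solution P \<longleftrightarrow> has_bounded_nontrivial_solution Q"
  proof
    assume "has_bounded_nontrivial_solution P"
    then show "has_bounded_nontrivial_solution Q"
      by (rule has_bounded_nontrivial_solution_exp_gauge[OF _ \<open>Re (- a) = 0\<close>])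
         (simp only: P_def Q_def gauge_P_to_Q[OF a_sq])
  next
    assume "has_bounded_nontrivial_solution Q"
    then show "has_bounded_nontrivial_solution P"
      by (rule has_bounded_nontrivial_solution_exp_gauge[OF _ \<open>Re a = 0\<close>])
         (simp only: P_def Q_def gauge_Q_to_P[OF a_sq])
  qed
  ultimately show ?thesis by (simp add: l_def)
qed

end
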